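(* Let $(H_q)_{q\ge0}$ be the Hermite polynomials, fix $u\in\mathbb R$ and $\gamma\in\mathbb R$. Then $$\sum_{q=1}^\infty \frac{H_q(u)^2}{q!\,q^{\gamma}}<\infty\quad\Longleftrightarrow\quad\gamma>\tfrac12.$$
   Context: Hermite polynomials are defined by $H_0(x)=1$, $H_1(x)=x$, $H_{q+1}(x)=xH_q(x)-qH_{q-1}(x)$. *)

theory Defs
  imports "HOL-Analysis.Analysis"
begin

text \<open>Probabilists' Hermite polynomials: H_0 = 1, H_1 = x, H_(q+1) = x H_q - q H_(q-1).\<close>
fun hermite :: "nat \<Rightarrow> real \<Rightarrow> real" where
  "hermite 0 x = 1"
| "hermite (Suc 0) x = x"
| "hermite (Suc (Suc q)) x = x * hermite (Suc q) x - real (Suc q) * hermite q x"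

end

theory Submission
  imports Defs
begin

text \<open>Write b_k = H_k(u)^2 / k! and S_n = b_0 + ... + b_n. The Christoffel-Darboux formula
  n! S_n = (n+1) H_n^2 + H_(n+1)^2 - u H_(n+1) H_n, with AM-GM on the cross term, shows that S_n
  equals (n+1)(b_n + b_(n+1)) up to an error of at most |u|/2 sqrt(n+1) (b_n + b_(n+1)).
  Since b_n + b_(n+1) = S_(n+1) - S_(n-1), this is a difference inequality S ~ n dS which
  forces S_n to grow like sqrt n: the ratios S_m / (sqrt m + |u| + 1) and (sqrt m - |u|) / S_m
  are eventually nondecreasing along steps of two. Hence b_q = O(q^(-1/2)) while
  b_q + b_(q+1) >= c q^(-1/2), and comparison with the series of q^(-gamma-1/2) puts the
  threshold at gamma = 1/2.\<close>

lemma abs_mult_le_sum_squares: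
  fixes a b t :: real
  shows "2 * t * \<bar>a * b\<bar> \<le> t^2 * a^2 + b^2"
proof -
  have "0 \<le> (t * \<bar>a\<bar> - \<bar>b\<bar>)^2" by simp
  then show ?thesis by (simp add: power2_eq_square algebra_simps abs_mult)
qed

lemma mult_le_mult_cross:
  fixes A B p q m m' :: real
  assumes "A * m' \<le> B * m" "p * m \<le> q * m'" "A \<ge> 0" "q \<ge> 0" "m > 0"
  shows "A * p \<le> B * q"
proof -
  have "(A * p) * m \<le> (A * m') * q"
    using mult_left_mono[OF assms(2,3)] by (simp add: ac_simps)
  also have "\<dots> \<le> (B * q) * m"
    using mult_right_mono[OF assms(1,4)] by (simp add: ac_simps)
  finally show ?thesis using assms(5) by simp
qed

lemma divide_le_divide_cross:
  fixes a b c d :: "'a::linordered_field"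
  assumes "a * d \<le> c * b" "b > 0" "d > 0"
  shows "a / b \<le> c / d"
  using assms by (simp add: divide_simps)

lemma two_step_mono_ge_min:
  fixes r :: "nat \<Rightarrow> 'a::linorder"
  assumes mono: "\<And>k. k \<ge> N \<Longrightarrow> r k \<le> r (k + 2)" and "m \<ge> N"
  shows "min (r N) (r (Suc N)) \<le> r m"
  using \<open>m \<ge> N\<close>
proof (induction m rule: less_induct)
  case (less m)
  show ?case
  proof (cases "m \<le> Suc N")
    case True
    with less.prems have "m = N \<or> m = Suc N" by linarith
    then show ?thesis by auto
  next
    case False
    define k where "k = m - 2"
    have k: "m = k + 2" "k \<ge> N" using False less.prems unfolding k_def by auto
    then have "min (r N) (r (Suc N)) \<le> r k" by (intro less.IH) auto
    also have "r k \<le> r m" using mono k by simp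
    finally show ?thesis .
  qed
qed

lemma eventually_le_sqrt_sequentially: "\<forall>\<^sub>F k in sequentially. t \<le> sqrt (real k)"
proof -
  have "filterlim (\<lambda>k. sqrt (real k)) at_top sequentially"
    by (rule filterlim_compose[OF sqrt_at_top filterlim_real_sequentially])
  then show ?thesis by (simp add: filterlim_at_top)
qed

lemma sqrt_mult_powr: "x \<ge> 0 \<Longrightarrow> sqrt x * x powr s = x powr (s + 1/2)"
  by (simp add: powr_add powr_half_sqrt)

lemma summable_Suc_powr_iff: "summable (\<lambda>q::nat. real (Suc q) powr s) \<longleftrightarrow> s < -1"
  using summable_Suc_iff[of "\<lambda>n. real n powr s"] summable_real_powr_iff by simp

text \<open>With x = sqrt(k+2) and y = sqrt k one has x - y = 2/(x + y). The next two inequalities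
  say that sqrt m + (2a+1) and sqrt m - 2a grow slowly enough to be comparison sequences for
  the recursion S_(k+2) ~ (k + 2 +- a x)(S_(k+2) - S_k).\<close>

lemma sqrt_step_lower:
  fixes a :: real and k :: nat
  assumes "a \<ge> 0" "k \<ge> 14"
  shows "(sqrt (real k + 2) + (2*a+1)) * (real k + 2 + a * sqrt (real k + 2))
    \<le> (sqrt k + (2*a+1)) * (real k + 3 + a * sqrt (real k + 2))"
proof -
  define x y M where "x = sqrt (k+2)" and "y = sqrt k" and "M = k+2 + a * sqrt (k+2)"
  have xx: "x * x = k + 2" and yy: "y * y = k" unfolding x_def y_def by simp_all
  have "y \<ge> 0" "y \<le> x" unfolding x_def y_def by simp_all
  have "x \<ge> 4" unfolding x_def using assms(2) real_sqrt_le_mono[of 16 "k+2"] by simp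
  have "y * y \<le> x * y" using \<open>y \<le> x\<close> \<open>y \<ge> 0\<close> by (rule mult_right_mono)
  moreover have "a * y \<ge> 0" using assms(1) \<open>y \<ge> 0\<close> by simp
  ultimately have "(x + y) * (2 * M) \<le> (x + y) * ((x + y) * (y + (2*a+1)))"
    using xx yy \<open>x \<ge> 4\<close> \<open>y \<ge> 0\<close> unfolding M_def x_def[symmetric]
    by (intro mult_left_mono) (auto simp: algebra_simps)
  also have "(x + y) * (2 * M) = (x + y) * ((x + y) * ((x - y) * M))"
    using xx yy by (simp add: algebra_simps)
  finally have "(x - y) * M \<le> y + (2*a+1)"
    using \<open>x \<ge> 4\<close> \<open>y \<ge> 0\<close> by (simp add: mult_le_cancel_left_pos)
  then have "(x + (2*a+1)) * M \<le> (y + (2*a+1)) * (M + 1)" by (simp add: algebra_simps)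
  then show ?thesis unfolding x_def y_def M_def by (simp add: add_ac)
qed

lemma sqrt_step_upper:
  fixes a :: real and k :: nat
  assumes "a \<ge> 0" "sqrt k \<ge> 2*a + 2"
  shows "(sqrt k - 2*a) * (real k + 2 - a * sqrt (real k + 2))
    \<le> (sqrt (real k + 2) - 2*a) * (real k + 1 - a * sqrt (real k + 2))"
proof -
  define x y L where "x = sqrt (k+2)" and "y = sqrt k" and "L = k+1 - a * sqrt (k+2)"
  have xx: "x * x = k + 2" and yy: "y * y = k" unfolding x_def y_def by simp_all
  have "y \<ge> 0" "y \<le> x" unfolding x_def y_def by simp_all
  have "y \<ge> 2*a + 2" using assms(2) unfolding y_def .
  have "x * y \<le> x * x" using \<open>y \<le> x\<close> \<open>y \<ge> 0\<close> by (intro mult_left_mono) auto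
  moreover have "a * y \<ge> 0" using assms(1) \<open>y \<ge> 0\<close> by simp
  ultimately have "(x + y) * ((x + y) * (y - 2*a)) \<le> (x + y) * (2 * L)"
    using xx yy \<open>y \<ge> 0\<close> \<open>y \<le> x\<close> unfolding L_def x_def[symmetric]
    by (intro mult_left_mono) (auto simp: algebra_simps)
  also have "(x + y) * (2 * L) = (x + y) * ((x + y) * ((x - y) * L))"
    using xx yy by (simp add: algebra_simps)
  finally have "y - 2*a \<le> (x - y) * L"
    using \<open>y \<ge> 2*a+2\<close> \<open>y \<le> x\<close> assms(1) by (simp add: mult_le_cancel_left_pos)
  then have "(y - 2*a) * (L + 1) \<le> (x - 2*a) * L" by (simp add: algebra_simps)
  then show ?thesis unfolding x_def y_def L_def by (simp add: algebra_simps)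
qed

definition hermite_term :: "real \<Rightarrow> nat \<Rightarrow> real" where
  "hermite_term u k = (hermite k u)^2 / fact k"

definition hermite_sum :: "real \<Rightarrow> nat \<Rightarrow> real" where
  "hermite_sum u n = (\<Sum>k\<le>n. hermite_term u k)"

lemma hermite_term_nonneg: "hermite_term u k \<ge> 0"
  by (simp add: hermite_term_def)

lemma fact_mult_hermite_term: "fact k * hermite_term u k = (hermite k u)^2"
  by (simp add: hermite_term_def)

lemma hermite_sum_ge_1: "hermite_sum u n \<ge> 1"
proof -
  have "hermite_term u 0 \<le> hermite_sum u n"
    unfolding hermite_sum_def by (rule member_le_sum) (auto simp: hermite_term_nonneg)
  then show ?thesis by (simp add: hermite_term_def)
qed

lemma hermite_sum_Suc_Suc:
  "hermite_sum u (Suc (Suc k)) = hermite_sum u k + (hermite_term u (Suc k) + hermite_term u (Suc (Suc k)))"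
  by (simp add: hermite_sum_def)

lemma hermite_christoffel_darboux:
  "fact n * hermite_sum u n
     = real (Suc n) * (hermite n u)^2 + (hermite (Suc n) u)^2 - u * hermite (Suc n) u * hermite n u"
proof (induction n)
  case 0
  then show ?case by (simp add: hermite_sum_def hermite_term_def power2_eq_square)
next
  case (Suc n)
  have "fact (Suc n) * hermite_sum u (Suc n)
      = real (Suc n) * (fact n * hermite_sum u n) + (hermite (Suc n) u)^2"
    using fact_mult_hermite_term[of "Suc n" u] by (simp add: hermite_sum_def algebra_simps)
  then show ?case
    using Suc.IH by (simp add: power2_eq_square algebra_simps)
qed

lemma hermite_sum_near_pair:
  "\<bar>hermite_sum u n - real (Suc n) * (hermite_term u n + hermite_term u (Suc n))\<bar>
     \<le> \<bar>u\<bar> / 2 * sqrt (Suc n) * (hermite_term u n + hermite_term u (Suc n))"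
proof -
  define d where "d = hermite_term u n + hermite_term u (Suc n)"
  define s where "s = sqrt (Suc n)"
  have s: "s > 0" "s^2 = Suc n" unfolding s_def by simp_all
  have "fact n * (real (Suc n) * d)
      = real (Suc n) * (fact n * hermite_term u n) + fact (Suc n) * hermite_term u (Suc n)"
    unfolding d_def by (simp add: algebra_simps)
  then have pair: "fact n * (real (Suc n) * d) = real (Suc n) * (hermite n u)^2 + (hermite (Suc n) u)^2"
    unfolding fact_mult_hermite_term .
  have "s * (2 * \<bar>hermite n u * hermite (Suc n) u\<bar>) \<le> s^2 * (hermite n u)^2 + (hermite (Suc n) u)^2"
    using abs_mult_le_sum_squares[of s "hermite n u" "hermite (Suc n) u"] s(1) by (simp add: ac_simps)
  also have "\<dots> = fact n * (s^2 * d)"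
    unfolding s(2) by (rule pair[symmetric])
  also have "\<dots> = s * (s * fact n * d)"
    by (simp add: power2_eq_square)
  finally have cross: "\<bar>hermite n u * hermite (Suc n) u\<bar> \<le> s * fact n * d / 2"
    using mult_le_cancel_left_pos[OF s(1)] by simp
  have "fact n * (hermite_sum u n - real (Suc n) * d) = - u * (hermite n u * hermite (Suc n) u)"
    using hermite_christoffel_darboux[of n u] pair by (simp add: algebra_simps)
  then have "fact n * \<bar>hermite_sum u n - real (Suc n) * d\<bar>
      = \<bar>u\<bar> * \<bar>hermite n u * hermite (Suc n) u\<bar>"
    by (metis abs_minus_cancel abs_mult abs_of_pos fact_gt_zero)
  also have "\<dots> \<le> \<bar>u\<bar> * (s * fact n * d / 2)"
    using cross by (rule mult_left_mono) simp
  also have "\<dots> = fact n * (\<bar>u\<bar> / 2 * s * d)"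
    by simp
  finally show ?thesis unfolding d_def s_def by simp
qed

lemma hermite_sum_Suc_near_pair:
  "\<bar>hermite_sum u (Suc k) - (real k + 2) * (hermite_term u (Suc k) + hermite_term u (Suc (Suc k)))\<bar>
     \<le> \<bar>u\<bar>/2 * sqrt (real k + 2) * (hermite_term u (Suc k) + hermite_term u (Suc (Suc k)))"
proof -
  have "real (Suc (Suc k)) = real k + 2" by simp
  then show ?thesis using hermite_sum_near_pair[of u "Suc k"] by (simp only:)
qed

lemma hermite_sum_le_pair:
  "hermite_sum u (Suc (Suc k))
     \<le> (real k + 3 + \<bar>u\<bar>/2 * sqrt (real k + 2)) * (hermite_term u (Suc k) + hermite_term u (Suc (Suc k)))"
proof -
  define d where "d = hermite_term u (Suc k) + hermite_term u (Suc (Suc k))"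
  define e where "e = \<bar>u\<bar>/2 * sqrt (real k + 2)"
  have "hermite_sum u (Suc k) \<le> (real k + 2) * d + e * d"
    using abs_le_D1[OF hermite_sum_Suc_near_pair[of u k, folded d_def e_def]] by linarith
  moreover have "hermite_sum u (Suc (Suc k)) = hermite_sum u (Suc k) + hermite_term u (Suc (Suc k))"
    by (simp add: hermite_sum_def)
  moreover have "(real k + 3 + e) * d = (real k + 2) * d + e * d + d"
    by (simp add: algebra_simps)
  ultimately have "hermite_sum u (Suc (Suc k)) \<le> (real k + 3 + e) * d"
    using hermite_term_nonneg[of u "Suc k"] d_def by linarith
  then show ?thesis unfolding d_def e_def .
qed

lemma hermite_sum_ge_pair:
  "(real k + 2 - \<bar>u\<bar>/2 * sqrt (real k + 2)) * (hermite_term u (Suc k) + hermite_term u (Suc (Suc k)))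
     \<le> hermite_sum u (Suc (Suc k))"
proof -
  define d where "d = hermite_term u (Suc k) + hermite_term u (Suc (Suc k))"
  define e where "e = \<bar>u\<bar>/2 * sqrt (real k + 2)"
  have "(real k + 2) * d - e * d \<le> hermite_sum u (Suc k)"
    using abs_le_D2[OF hermite_sum_Suc_near_pair[of u k, folded d_def e_def]] by linarith
  moreover have "hermite_sum u (Suc (Suc k)) = hermite_sum u (Suc k) + hermite_term u (Suc (Suc k))"
    by (simp add: hermite_sum_def)
  moreover have "(real k + 2 - e) * d = (real k + 2) * d - e * d"
    by (simp add: algebra_simps)
  ultimately show ?thesis
    using hermite_term_nonneg[of u "Suc (Suc k)"] unfolding d_def[symmetric] e_def[symmetric] by linarith
qed

lemma hermite_sum_lower_step:
  assumes "k \<ge> 14"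
  shows "hermite_sum u k / (sqrt k + (\<bar>u\<bar> + 1))
    \<le> hermite_sum u (k + 2) / (sqrt (real k + 2) + (\<bar>u\<bar> + 1))"
proof -
  define M where "M = real k + 2 + \<bar>u\<bar>/2 * sqrt (real k + 2)"
  have M: "M > 0" unfolding M_def by (simp add: add_pos_nonneg)
  define d where "d = hermite_term u (Suc k) + hermite_term u (Suc (Suc k))"
  have "hermite_sum u (k + 2) \<le> (M + 1) * d"
    using hermite_sum_le_pair[of u k] unfolding M_def d_def by (simp add: add_ac)
  moreover have "hermite_sum u k * (M + 1) = hermite_sum u (k + 2) * M + (hermite_sum u (k + 2) - (M + 1) * d)"
    using hermite_sum_Suc_Suc[of u k] unfolding d_def by (simp add: algebra_simps)
  ultimately have step: "hermite_sum u k * (M + 1) \<le> hermite_sum u (k + 2) * M"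
    by linarith
  have sqrt_step: "(sqrt (real k + 2) + (\<bar>u\<bar> + 1)) * M \<le> (sqrt k + (\<bar>u\<bar> + 1)) * (M + 1)"
    using sqrt_step_lower[of "\<bar>u\<bar>/2" k] assms unfolding M_def by (simp add: algebra_simps)
  have pos: "sqrt k + (\<bar>u\<bar> + 1) > 0" "sqrt (real k + 2) + (\<bar>u\<bar> + 1) > 0"
    by (simp_all add: add_nonneg_pos)
  have "hermite_sum u k * (sqrt (real k + 2) + (\<bar>u\<bar> + 1))
      \<le> hermite_sum u (k + 2) * (sqrt k + (\<bar>u\<bar> + 1))"
    using hermite_sum_ge_1[of u k] pos(1) M by (intro mult_le_mult_cross[OF step sqrt_step]) simp_all
  then show ?thesis
    using pos by (intro divide_le_divide_cross) (simp_all only: mult.commute)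
qed

lemma hermite_sum_upper_step:
  assumes "sqrt k \<ge> \<bar>u\<bar> + 2"
  shows "(sqrt k - \<bar>u\<bar>) / hermite_sum u k \<le> (sqrt (real k + 2) - \<bar>u\<bar>) / hermite_sum u (k + 2)"
proof -
  define L where "L = real k + 1 - \<bar>u\<bar>/2 * sqrt (real k + 2)"
  define d where "d = hermite_term u (Suc k) + hermite_term u (Suc (Suc k))"
  have "sqrt (real k + 2) \<ge> sqrt k" by simp
  then have u: "\<bar>u\<bar> \<le> sqrt (real k + 2)" using assms by linarith
  then have "\<bar>u\<bar> * sqrt (real k + 2) \<le> sqrt (real k + 2) * sqrt (real k + 2)"
    by (rule mult_right_mono) simp
  then have L: "L + 1 > 0" unfolding L_def by simp
  have L1: "L + 1 = real k + 2 - \<bar>u\<bar>/2 * sqrt (real k + 2)" unfolding L_def by simp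
  have "(L + 1) * d \<le> hermite_sum u (k + 2)"
    unfolding L1 d_def add_2_eq_Suc' by (rule hermite_sum_ge_pair)
  moreover have "hermite_sum u k * (L + 1) = hermite_sum u (k + 2) * L + (hermite_sum u (k + 2) - (L + 1) * d)"
    using hermite_sum_Suc_Suc[of u k] unfolding d_def by (simp add: algebra_simps)
  ultimately have step: "hermite_sum u (k + 2) * L \<le> hermite_sum u k * (L + 1)"
    by linarith
  have sqrt_step: "(sqrt k - \<bar>u\<bar>) * (L + 1) \<le> (sqrt (real k + 2) - \<bar>u\<bar>) * L"
    using sqrt_step_upper[of "\<bar>u\<bar>/2" k] assms unfolding L_def by (simp add: algebra_simps)
  have "hermite_sum u (k + 2) * (sqrt k - \<bar>u\<bar>) \<le> hermite_sum u k * (sqrt (real k + 2) - \<bar>u\<bar>)"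
    using hermite_sum_ge_1[of u "k + 2"] u L by (intro mult_le_mult_cross[OF step sqrt_step]) simp_all
  moreover have "hermite_sum u k > 0" "hermite_sum u (k + 2) > 0"
    using hermite_sum_ge_1[of u k] hermite_sum_ge_1[of u "k + 2"] by linarith+
  ultimately show ?thesis
    by (intro divide_le_divide_cross) (simp_all only: mult.commute)
qed

lemma hermite_sum_ge_sqrt: "\<exists>c>0. \<forall>\<^sub>F m in sequentially. c * sqrt m \<le> hermite_sum u m"
proof -
  define r where "r m = hermite_sum u m / (sqrt m + (\<bar>u\<bar> + 1))" for m
  define c where "c = min (r 14) (r 15)"
  have pos: "sqrt m + (\<bar>u\<bar> + 1) > 0" for m :: nat by (simp add: add_nonneg_pos)
  have "r m > 0" for m
    unfolding r_def using hermite_sum_ge_1[of u m] pos[of m] by simp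
  then have "c > 0" unfolding c_def by simp
  moreover have "c * sqrt m \<le> hermite_sum u m" if "m \<ge> 14" for m
  proof -
    have "c \<le> r m"
      unfolding c_def using that hermite_sum_lower_step[of _ u]
      by (intro two_step_mono_ge_min[where N = 14, simplified]) (simp_all add: r_def add.commute)
    then have "c * (sqrt m + (\<bar>u\<bar> + 1)) \<le> hermite_sum u m"
      unfolding r_def using pos[of m] by (simp add: le_divide_eq)
    moreover have "c * sqrt m \<le> c * (sqrt m + (\<bar>u\<bar> + 1))"
      using \<open>c > 0\<close> by simp
    ultimately show ?thesis by linarith
  qed
  ultimately show ?thesis unfolding eventually_sequentially by blast
qed

lemma hermite_sum_le_sqrt: "\<exists>C. \<forall>\<^sub>F m in sequentially. hermite_sum u m \<le> C * sqrt m"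
proof -
  obtain N where N: "\<And>k. k \<ge> N \<Longrightarrow> \<bar>u\<bar> + 3 \<le> sqrt (real k)"
    using eventually_le_sqrt_sequentially[of "\<bar>u\<bar> + 3"] unfolding eventually_sequentially by blast
  define r where "r m = (sqrt m - \<bar>u\<bar>) / hermite_sum u m" for m
  define c where "c = min (r N) (r (Suc N))"
  have "r m > 0" if "m \<ge> N" for m
    unfolding r_def using hermite_sum_ge_1[of u m] N[OF that] by simp
  then have "c > 0" unfolding c_def by simp
  have mono: "r k \<le> r (k + 2)" if "k \<ge> N" for k
    using hermite_sum_upper_step[where k = k and u = u] N[OF that] by (simp add: r_def add.commute)
  have "hermite_sum u m \<le> 1 / c * sqrt m" if "m \<ge> N" for m
  proof -
    have "c \<le> r m" unfolding c_def by (rule two_step_mono_ge_min[where r = r, OF mono that])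
    then have "c * hermite_sum u m \<le> sqrt m - \<bar>u\<bar>"
      unfolding r_def using hermite_sum_ge_1[of u m] by (simp add: le_divide_eq)
    then have "c * hermite_sum u m \<le> sqrt m" by linarith
    then show ?thesis using \<open>c > 0\<close> by (simp add: field_simps)
  qed
  then show ?thesis unfolding eventually_sequentially by blast
qed

lemma hermite_term_le_sqrt:
  "\<exists>C. \<forall>\<^sub>F q in sequentially. hermite_term u (Suc q) \<le> C / sqrt (Suc q)"
proof -
  obtain C where C: "\<forall>\<^sub>F m in sequentially. hermite_sum u m \<le> C * sqrt m"
    using hermite_sum_le_sqrt by blast
  have bound: "hermite_term u (Suc q) \<le> 2 * C / sqrt (Suc q)"
    if S: "hermite_sum u (q + 2) \<le> C * sqrt (real (q + 2))" and u: "\<bar>u\<bar> \<le> sqrt q" for q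
  proof -
    define x where "x = sqrt (real q + 2)"
    define b where "b = hermite_term u (Suc q)"
    define b' where "b' = hermite_term u (Suc (Suc q))"
    have x: "x \<ge> 1" "x * x = real q + 2" "sqrt (Suc q) \<le> x" "sqrt q \<le> x" unfolding x_def by simp_all
    have b: "b \<ge> 0" "b' \<ge> 0" unfolding b_def b'_def by (simp_all add: hermite_term_nonneg)
    have "\<bar>u\<bar> \<le> x" using u x(4) by linarith
    from mult_right_mono[OF this, of x] x(1)
    have coef: "x * x / 2 \<le> real q + 2 - \<bar>u\<bar>/2 * x" using x(2) by simp
    have "0 \<le> x * x" by simp
    with coef have coef0: "0 \<le> real q + 2 - \<bar>u\<bar>/2 * x" by linarith
    have "x * x / 2 * b \<le> (real q + 2 - \<bar>u\<bar>/2 * x) * b"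
      using coef b(1) by (rule mult_right_mono)
    also have "\<dots> \<le> (real q + 2 - \<bar>u\<bar>/2 * x) * (b + b')"
      using coef0 b(2) by (intro mult_left_mono) simp_all
    also have "\<dots> \<le> hermite_sum u (q + 2)"
      unfolding x_def b_def b'_def add_2_eq_Suc' by (rule hermite_sum_ge_pair)
    also have "\<dots> \<le> C * x" using S unfolding x_def by (simp add: add.commute)
    finally have "x * (x * b) \<le> x * (2 * C)" by (simp add: algebra_simps)
    then have xb: "x * b \<le> 2 * C" using x(1) by simp
    have "sqrt (Suc q) * b \<le> x * b" using x(3) b(1) by (rule mult_right_mono)
    then have "b * sqrt (Suc q) \<le> 2 * C" using xb by (simp add: mult.commute)
    then show ?thesis unfolding b_def by (simp add: le_divide_eq)
  qed
  have "\<forall>\<^sub>F q in sequentially. hermite_sum u (q + 2) \<le> C * sqrt (real (q + 2))"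
    using C by (rule eventually_sequentially_seg[THEN iffD2])
  with eventually_le_sqrt_sequentially[of "\<bar>u\<bar>"]
  have "\<forall>\<^sub>F q in sequentially. hermite_term u (Suc q) \<le> 2 * C / sqrt (Suc q)"
    by eventually_elim (rule bound)
  then show ?thesis by blast
qed

lemma hermite_pair_ge_sqrt:
  "\<exists>c>0. \<forall>\<^sub>F q in sequentially.
     c / sqrt (real q + 2) \<le> hermite_term u (Suc q) + hermite_term u (Suc (Suc q))"
proof -
  obtain c where "c > 0" and c: "\<forall>\<^sub>F m in sequentially. c * sqrt m \<le> hermite_sum u m"
    using hermite_sum_ge_sqrt by blast
  define a where "a = \<bar>u\<bar>/2"
  have "a \<ge> 0" unfolding a_def by simp
  have bound: "c / (2 + a) / sqrt (real q + 2) \<le> hermite_term u (Suc q) + hermite_term u (Suc (Suc q))"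
    if S: "c * sqrt (real (q + 2)) \<le> hermite_sum u (q + 2)" for q
  proof -
    define x where "x = sqrt (real q + 2)"
    define d where "d = hermite_term u (Suc q) + hermite_term u (Suc (Suc q))"
    have x: "x \<ge> 1" "x * x = real q + 2" unfolding x_def by simp_all
    have "d \<ge> 0" unfolding d_def by (simp add: add_nonneg_nonneg hermite_term_nonneg)
    have "a * x \<le> a * (x * x)" using \<open>a \<ge> 0\<close> x(1) by (simp add: mult_left_mono)
    then have coef: "real q + 3 + a * x \<le> (2 + a) * (x * x)" using x by (simp add: algebra_simps)
    have "c * x \<le> hermite_sum u (q + 2)" using S unfolding x_def by (simp add: add.commute)
    also have "\<dots> \<le> (real q + 3 + a * x) * d"
      unfolding x_def d_def a_def add_2_eq_Suc' by (rule hermite_sum_le_pair)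
    also have "\<dots> \<le> (2 + a) * (x * x) * d" using coef \<open>d \<ge> 0\<close> by (rule mult_right_mono)
    finally have "x * c \<le> x * ((2 + a) * x * d)" by (simp add: algebra_simps)
    then have "c \<le> d * ((2 + a) * x)" using x(1) by (simp add: ac_simps)
    moreover have "(2 + a) * x > 0" using x(1) \<open>a \<ge> 0\<close> by simp
    ultimately have "c / ((2 + a) * x) \<le> d" by (simp add: pos_divide_le_eq)
    then show ?thesis unfolding x_def d_def by simp
  qed
  have "\<forall>\<^sub>F q in sequentially. c * sqrt (real (q + 2)) \<le> hermite_sum u (q + 2)"
    using c by (rule eventually_sequentially_seg[THEN iffD2])
  then have "\<forall>\<^sub>F q in sequentially.
      c / (2 + a) / sqrt (real q + 2) \<le> hermite_term u (Suc q) + hermite_term u (Suc (Suc q))"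
    by eventually_elim (rule bound)
  moreover have "c / (2 + a) > 0" using \<open>c > 0\<close> \<open>a \<ge> 0\<close> by simp
  ultimately show ?thesis by blast
qed

lemma summable_hermite_term_powr:
  assumes "\<gamma> > 1/2"
  shows "summable (\<lambda>q. hermite_term u (Suc q) / real (Suc q) powr \<gamma>)"
proof -
  obtain C where C: "\<forall>\<^sub>F q in sequentially. hermite_term u (Suc q) \<le> C / sqrt (Suc q)"
    using hermite_term_le_sqrt by blast
  have "summable (\<lambda>q. C * real (Suc q) powr (-(\<gamma> + 1/2)))"
    using assms summable_Suc_powr_iff[of "-(\<gamma> + 1/2)"] by simp
  moreover from C have "\<forall>\<^sub>F q in sequentially.
      norm (hermite_term u (Suc q) / real (Suc q) powr \<gamma>) \<le> C * real (Suc q) powr (-(\<gamma> + 1/2))"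
  proof eventually_elim
    case (elim q)
    have "norm (hermite_term u (Suc q) / real (Suc q) powr \<gamma>)
        = hermite_term u (Suc q) / real (Suc q) powr \<gamma>"
      by (simp add: hermite_term_nonneg)
    also have "\<dots> \<le> C / sqrt (Suc q) / real (Suc q) powr \<gamma>"
      by (rule divide_right_mono[OF elim]) simp
    also have "\<dots> = C / (sqrt (Suc q) * real (Suc q) powr \<gamma>)"
      by simp
    also have "\<dots> = C * real (Suc q) powr (-(\<gamma> + 1/2))"
      unfolding sqrt_mult_powr[OF of_nat_0_le_iff] powr_minus_divide by simp
    finally show ?case .
  qed
  ultimately show ?thesis by (rule summable_comparison_test_ev[rotated])
qed

lemma not_summable_hermite_term_powr:
  assumes "\<gamma> \<le> 1/2"
  shows "\<not> summable (\<lambda>q. hermite_term u (Suc q) / real (Suc q) powr \<gamma>)"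
proof
  define r where "r q = hermite_term u (Suc q) / sqrt (Suc q)" for q
  assume "summable (\<lambda>q. hermite_term u (Suc q) / real (Suc q) powr \<gamma>)"
  moreover have "norm (r q) \<le> hermite_term u (Suc q) / real (Suc q) powr \<gamma>" for q
  proof -
    have "real (Suc q) powr \<gamma> \<le> sqrt (Suc q)"
      using powr_mono[OF assms, of "real (Suc q)"] by (simp add: powr_half_sqrt)
    then show ?thesis unfolding r_def by (simp add: hermite_term_nonneg divide_left_mono)
  qed
  ultimately have "summable r"
    by (rule summable_comparison_test'[where N = 0])
  then have "summable (\<lambda>q. r q + r (Suc q))"
    by (intro summable_add) (simp_all add: summable_Suc_iff)
  moreover obtain c where "c > 0" and c: "\<forall>\<^sub>F q in sequentially.
      c / sqrt (real q + 2) \<le> hermite_term u (Suc q) + hermite_term u (Suc (Suc q))"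
    using hermite_pair_ge_sqrt by blast
  from c have "\<forall>\<^sub>F q in sequentially. norm (c * real (Suc (Suc q)) powr (-1)) \<le> r q + r (Suc q)"
  proof eventually_elim
    case (elim q)
    define x where "x = sqrt (real q + 2)"
    have x: "x > 0" "x * x = real q + 2" "sqrt (Suc q) \<le> x" unfolding x_def by simp_all
    have "norm (c * real (Suc (Suc q)) powr (-1)) = c / x / x"
      using \<open>c > 0\<close> x(2) by (simp add: powr_minus_divide add.commute)
    also have "\<dots> \<le> (hermite_term u (Suc q) + hermite_term u (Suc (Suc q))) / x"
      by (rule divide_right_mono[OF elim[folded x_def]]) (use x(1) in simp)
    also have "\<dots> \<le> r q + r (Suc q)"
      using x hermite_term_nonneg[of u "Suc q"] unfolding r_def
      by (simp add: add_divide_distrib divide_left_mono x_def add.commute)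
    finally show ?case .
  qed
  ultimately have "summable (\<lambda>q. c * real (Suc (Suc q)) powr (-1))"
    by (rule summable_comparison_test_ev[rotated])
  with \<open>c > 0\<close> have "summable (\<lambda>q. real (Suc (Suc q)) powr (-1))"
    by (subst (asm) summable_cmult_iff) simp
  then show False
    using summable_Suc_iff[of "\<lambda>q. real (Suc q) powr (-1)"] summable_Suc_powr_iff[of "-1"] by simp
qed

theorem mainTheorem8:
  fixes u \<gamma> :: real
  shows "summable (\<lambda>q::nat. (hermite (Suc q) u)^2 / (fact (Suc q) * real (Suc q) powr \<gamma>))
         \<longleftrightarrow> \<gamma> > 1/2"
proof -
  have "(hermite (Suc q) u)^2 / (fact (Suc q) * real (Suc q) powr \<gamma>)
      = hermite_term u (Suc q) / real (Suc q) powr \<gamma>" for q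
    by (simp add: hermite_term_def)
  then show ?thesis
    using summable_hermite_term_powr[of \<gamma> u] not_summable_hermite_term_powr[of \<gamma> u]
    by (cases "\<gamma> > 1/2") simp_all
qed

end
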